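(* For every integer $p>1$ and every $N\in\mathbb N$, the group $\mathrm{GL}_{p-rec}(\mathbb C)$ contains an element $G$ of complexity $2$ whose inverse $G^{-1}$ has complexity $\ge N$.
   Context: $\mathcal M_{p\times p}$ is the monoid of pairs $(U,W)$ of words of common length over $\{0,\dots,p-1\}$ (concatenation). For $A:\mathcal M_{p\times p}\to\mathbb C$ (values $A[U,W]$), shift maps act by $(\rho(S,T)A)[U,W]=A[US,WT]$; the complexity of $A$ is the dimension of the linear span of $\{\rho(S,T)A\}$, and $\mathrm{Rec}_{p\times p}(\mathbb C)$ is the set of $A$ of finite complexity. It is an algebra for the product $(AB)[U,W]=\sum_{V\in\{0,\dots,p-1\}^l}A[U,V]B[V,W]$ ($(U,W)$ of length $l$), with identity $\mathrm{Id}[U,W]=1$ if $U=W$ and $0$ otherwise. $\mathrm{GL}_{p-rec}(\mathbb C)$ is the group of elements of $\mathrm{Rec}_{p\times p}(\mathbb C)$ invertible in $\mathrm{Rec}_{p\times p}(\mathbb C)$. *)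

theory Defs
  imports "HOL-Analysis.Analysis" "HOL-Library.Function_Algebras"
begin

text \<open>Functions on the monoid M_{p x p}: pairs (U,W) of words of common length over
  the alphabet {0,...,p-1}. Words are nat lists; values outside the monoid are junk and
  are ignored (all notions below only look at values on the monoid).\<close>

type_synonym pmat = "nat list \<Rightarrow> nat list \<Rightarrow> complex"

definition inM :: "nat \<Rightarrow> nat list \<Rightarrow> nat list \<Rightarrow> bool" where
  "inM p U W \<longleftrightarrow> length U = length W \<and> set U \<subseteq> {..<p} \<and> set W \<subseteq> {..<p}"

definition restr :: "nat \<Rightarrow> pmat \<Rightarrow> pmat" where
  "restr p A = (\<lambda>U W. if inM p U W then A U W else 0)"

definition shift :: "nat list \<Rightarrow> nat list \<Rightarrow> pmat \<Rightarrow> pmat" where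
  "shift S T A = (\<lambda>U W. A (U @ S) (W @ T))"

definition shifts :: "nat \<Rightarrow> pmat \<Rightarrow> pmat set" where
  "shifts p A = {restr p (shift S T A) | S T. inM p S T}"

definition cscale :: "complex \<Rightarrow> pmat \<Rightarrow> pmat" where
  "cscale c A = (\<lambda>U W. c * A U W)"

definition complexity :: "nat \<Rightarrow> pmat \<Rightarrow> nat" where
  "complexity p A = vector_space.dim cscale (shifts p A)"

definition isRec :: "nat \<Rightarrow> pmat \<Rightarrow> bool" where
  "isRec p A \<longleftrightarrow> (\<exists>B. finite B \<and> shifts p A \<subseteq> module.span cscale B)"

definition pmult :: "nat \<Rightarrow> pmat \<Rightarrow> pmat \<Rightarrow> pmat" where
  "pmult p A B = (\<lambda>U W. \<Sum>V\<in>{V. length V = length U \<and> set V \<subseteq> {..<p}}. A U V * B V W)"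

definition pId :: "pmat" where
  "pId = (\<lambda>U W. if U = W then 1 else 0)"

definition isInverse :: "nat \<Rightarrow> pmat \<Rightarrow> pmat \<Rightarrow> bool" where
  "isInverse p G H \<longleftrightarrow> isRec p G \<and> isRec p H \<and>
     restr p (pmult p G H) = restr p pId \<and> restr p (pmult p H G) = restr p pId"

end

theory Submission
  imports Defs
begin

(* Let \<zeta> be a primitive M-th root of unity and let G be diagonal with G[U,U] = g |U|,
   g l = 1 - \<zeta>^l/2; its inverse is diagonal with h = 1/g. For such length-diagonal
   elements the shifts are, up to 0, the diagonals of the translates l \<mapsto> f (l + m),
   so the complexity is the dimension of the span of the translates of the sequence.
   Both g and h are exponential polynomials \<Sum> c r (\<zeta>^r)^l with nonzero coefficients:
   g over r < 2, and, by the geometric series and \<zeta>^(lM) = 1,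
   h l = \<Sum>r<M. 2^-r (\<zeta>^r)^l / (1 - 2^-M). For distinct bases and nonzero coefficients
   the translates span exactly the span of the geometric sequences (z i)^l, which are
   independent: shift minus z j annihilates the j-th term, which gives an induction on
   the number of terms. *)

lemma dim_image_inj_linear:
  assumes "Vector_Spaces.linear s1 s2 f" "inj f"
  shows "vector_space.dim s2 (f ` S) = vector_space.dim s1 S"
proof -
  interpret f: Vector_Spaces.linear s1 s2 f by fact
  obtain B where B: "B \<subseteq> S" "f.vs1.independent B" "S \<subseteq> f.vs1.span B" "card B = f.vs1.dim S"
    by (rule f.vs1.basis_exists)
  have "f.vs1.span B = f.vs1.span S"
    using B(1,3) f.vs1.span_superset by (auto simp: f.vs1.span_eq)
  then have "f.vs2.span (f ` B) = f.vs2.span (f ` S)"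
    by (simp add: f.span_image)
  moreover have "f.vs2.independent (f ` B)"
    using f.independent_injective_image[OF B(2)] inj_on_subset[OF assms(2)] by blast
  ultimately have "f.vs2.dim (f ` S) = card (f ` B)"
    by (metis f.vs2.dim_eq_card)
  also have "\<dots> = card B"
    using inj_on_subset[OF assms(2)] by (simp add: card_image)
  finally show ?thesis using B(4) by simp
qed

definition seq_scale :: "complex \<Rightarrow> (nat \<Rightarrow> complex) \<Rightarrow> nat \<Rightarrow> complex" where
  "seq_scale c f = (\<lambda>l. c * f l)"

interpretation seq: vector_space seq_scale
  by unfold_locales (auto simp: seq_scale_def fun_eq_iff algebra_simps)

lemma sum_fun_apply: "(\<Sum>i\<in>I. f i) x = (\<Sum>i\<in>I. f i x)"
  by (induction I rule: infinite_finite_induct) auto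

definition translates :: "(nat \<Rightarrow> complex) \<Rightarrow> (nat \<Rightarrow> complex) set" where
  "translates f = range (\<lambda>m l. f (l + m))"

lemma linear_seq_shift: "Vector_Spaces.linear seq_scale seq_scale (\<lambda>x l. x (Suc l))"
  by unfold_locales (auto simp: seq_scale_def)

lemma span_translates_shift_closed:
  assumes "x \<in> seq.span (translates f)"
  shows "(\<lambda>l. x (Suc l)) \<in> seq.span (translates f)"
proof -
  interpret shift: Vector_Spaces.linear seq_scale seq_scale "\<lambda>x l. x (Suc l)"
    by (rule linear_seq_shift)
  have "translates f \<subseteq> {x. (\<lambda>l. x (Suc l)) \<in> seq.span (translates f)}"
  proof
    fix y assume "y \<in> translates f"
    then obtain m where "y = (\<lambda>l. f (l + m))" by (auto simp: translates_def)
    then have "(\<lambda>l. y (Suc l)) \<in> translates f"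
      by (auto simp: translates_def intro!: range_eqI[of _ _ "Suc m"])
    then show "y \<in> {x. (\<lambda>l. x (Suc l)) \<in> seq.span (translates f)}" by (simp add: seq.span_base)
  qed
  then have "seq.span (translates f) \<subseteq> {x. (\<lambda>l. x (Suc l)) \<in> seq.span (translates f)}"
    by (intro seq.span_minimal shift.subspace_linear_preimage seq.subspace_span)
  then show ?thesis using assms by blast
qed

definition exp_poly :: "('i \<Rightarrow> complex) \<Rightarrow> ('i \<Rightarrow> complex) \<Rightarrow> 'i set \<Rightarrow> nat \<Rightarrow> complex" where
  "exp_poly c z I = (\<lambda>l. \<Sum>i\<in>I. c i * z i ^ l)"

lemma exp_poly_eq_sum: "exp_poly c z I = (\<Sum>i\<in>I. seq_scale (c i) ((^) (z i)))"
  by (simp add: exp_poly_def seq_scale_def fun_eq_iff sum_fun_apply)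

lemma exp_poly_in_span: "exp_poly c z I \<in> seq.span ((\<lambda>i. (^) (z i)) ` I)"
  unfolding exp_poly_eq_sum by (intro seq.span_sum seq.span_scale seq.span_base) auto

lemma exp_poly_translate: "(\<lambda>l. exp_poly c z I (l + m)) = exp_poly (\<lambda>i. c i * z i ^ m) z I"
  by (simp add: exp_poly_def power_add mult_ac)

lemma translates_exp_poly_subset: "translates (exp_poly c z I) \<subseteq> seq.span ((\<lambda>i. (^) (z i)) ` I)"
  by (auto simp: translates_def exp_poly_translate exp_poly_in_span)

lemma exp_poly_shift_minus_scale:
  "(\<lambda>l. exp_poly c z I (Suc l)) - seq_scale w (exp_poly c z I) = exp_poly (\<lambda>i. c i * (z i - w)) z I"
  by (simp add: exp_poly_def seq_scale_def fun_eq_iff sum_distrib_left sum_subtractf[symmetric] algebra_simps)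

lemma exp_poly_insert:
  "finite I \<Longrightarrow> j \<notin> I \<Longrightarrow>
    exp_poly c z (insert j I) = seq_scale (c j) ((^) (z j)) + exp_poly c z I"
  by (simp add: exp_poly_def seq_scale_def fun_eq_iff)

lemma geometric_mem_shift_closed_subspace:
  assumes T: "seq.subspace T" and shift: "\<And>x. x \<in> T \<Longrightarrow> (\<lambda>l. x (Suc l)) \<in> T"
    and "finite I" "inj_on z I" "\<forall>i\<in>I. c i \<noteq> 0" "exp_poly c z I \<in> T"
  shows "(\<lambda>i. (^) (z i)) ` I \<subseteq> T"
  using assms(3-)
proof (induction I arbitrary: c rule: finite_induct)
  case empty
  then show ?case by simp
next
  case (insert j I)
  \<comment> \<open>Shift minus multiplication by z j kills the j-th term and keeps the other coefficients nonzero.\<close>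
  have "exp_poly (\<lambda>i. c i * (z i - z j)) z (insert j I) \<in> T"
    unfolding exp_poly_shift_minus_scale[symmetric]
    using insert.prems by (intro seq.subspace_diff[OF T] shift seq.subspace_scale[OF T])
  then have "exp_poly (\<lambda>i. c i * (z i - z j)) z I \<in> T"
    using insert.hyps by (simp add: exp_poly_insert)
  moreover have "\<forall>i\<in>I. c i * (z i - z j) \<noteq> 0"
    using insert.prems insert.hyps by (auto simp: inj_on_def)
  ultimately have geoms: "(\<lambda>i. (^) (z i)) ` I \<subseteq> T"
    using insert.IH[of "\<lambda>i. c i * (z i - z j)"] insert.prems by (simp add: inj_on_insert)
  have "exp_poly c z I \<in> T"
    unfolding exp_poly_eq_sum using geoms by (auto intro!: seq.subspace_sum[OF T] seq.subspace_scale[OF T])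
  moreover have "seq_scale (c j) ((^) (z j)) = exp_poly c z (insert j I) - exp_poly c z I"
    using insert.hyps by (simp add: exp_poly_insert)
  ultimately have "seq_scale (c j) ((^) (z j)) \<in> T"
    using seq.subspace_diff[OF T insert.prems(3)] by simp
  then have "seq_scale (inverse (c j)) (seq_scale (c j) ((^) (z j))) \<in> T"
    by (rule seq.subspace_scale[OF T])
  then have "(^) (z j) \<in> T"
    using insert.prems by (simp add: seq.scale_scale)
  then show ?case using geoms insert.prems by auto
qed

lemma exp_poly_eq_0_imp_coeffs_0:
  assumes "finite I" "inj_on z I" "exp_poly c z I = 0" "i \<in> I"
  shows "c i = 0"
proof (rule ccontr)
  assume "c i \<noteq> 0"
  let ?J = "{i\<in>I. c i \<noteq> 0}"
  \<comment> \<open>The zero subspace is shift-closed, so the geometric sequences of the support ?J would vanish.\<close>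
  have "exp_poly c z ?J = exp_poly c z I"
    unfolding exp_poly_def using assms(1) by (intro ext sum.mono_neutral_left) auto
  moreover have "inj_on z ?J"
    by (rule inj_on_subset[OF assms(2)]) blast
  moreover have "(\<lambda>l. x (Suc l)) \<in> {0}" if "x \<in> {0}" for x :: "nat \<Rightarrow> complex"
    using that by (simp add: zero_fun_def)
  ultimately have "(\<lambda>i. (^) (z i)) ` ?J \<subseteq> {0}"
    using assms(1,3) by (intro geometric_mem_shift_closed_subspace[of "{0}"]) auto
  then have "(^) (z i) = 0"
    using \<open>c i \<noteq> 0\<close> assms(4) by blast
  then have "z i ^ 0 = 0"
    by (metis zero_fun_apply)
  then show False by simp
qed

lemma independent_geometric:
  assumes "finite I" "inj_on z I"
  shows "seq.independent ((\<lambda>i. (^) (z i)) ` I)" "inj_on (\<lambda>i. (^) (z i)) I"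
proof -
  show inj: "inj_on (\<lambda>i. (^) (z i)) I"
  proof (rule inj_onI)
    fix i j assume "i \<in> I" "j \<in> I" and eq: "(^) (z i) = (^) (z j)"
    have "z i ^ 1 = z j ^ 1" using fun_cong[OF eq, of 1] .
    then show "i = j" using assms(2) \<open>i \<in> I\<close> \<open>j \<in> I\<close> by (simp add: inj_on_eq_iff)
  qed
  show "seq.independent ((\<lambda>i. (^) (z i)) ` I)"
  proof (rule seq.independent_if_scalars_zero)
    fix a x
    assume sum: "(\<Sum>x\<in>(\<lambda>i. (^) (z i)) ` I. seq_scale (a x) x) = 0"
      and x: "x \<in> (\<lambda>i. (^) (z i)) ` I"
    have "exp_poly (\<lambda>i. a ((^) (z i))) z I = 0"
      using sum by (simp add: exp_poly_eq_sum sum.reindex[OF inj])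
    moreover obtain i where "i \<in> I" "x = (^) (z i)"
      using x by blast
    ultimately show "a x = 0"
      using exp_poly_eq_0_imp_coeffs_0[OF assms] by simp
  qed (use assms in simp)
qed

lemma dim_translates_exp_poly:
  assumes "finite I" "inj_on z I" "\<forall>i\<in>I. c i \<noteq> 0"
  shows "seq.dim (translates (exp_poly c z I)) = card I"
proof -
  let ?B = "(\<lambda>i. (^) (z i)) ` I"
  have "exp_poly c z I \<in> translates (exp_poly c z I)"
    unfolding translates_def by (rule range_eqI[of _ _ 0]) simp
  then have "?B \<subseteq> seq.span (translates (exp_poly c z I))"
    using assms span_translates_shift_closed seq.span_base
    by (intro geometric_mem_shift_closed_subspace[where T = "seq.span (translates (exp_poly c z I))"])
      simp_all
  then have "seq.span (translates (exp_poly c z I)) = seq.span ?B"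
    using translates_exp_poly_subset by (simp add: seq.span_eq)
  then have "seq.dim (translates (exp_poly c z I)) = card ?B"
    using independent_geometric(1)[OF assms(1,2)] seq.dim_eq_card by blast
  also have "\<dots> = card I"
    using independent_geometric(2)[OF assms(1,2)] by (rule card_image)
  finally show ?thesis .
qed

interpretation pm: vector_space cscale
  by unfold_locales (auto simp: cscale_def fun_eq_iff algebra_simps)

definition length_diag :: "(nat \<Rightarrow> complex) \<Rightarrow> pmat" where
  "length_diag f = (\<lambda>U W. if U = W then f (length U) else 0)"

lemma restr_shift_length_diag:
  assumes "inM p S T"
  shows "restr p (shift S T (length_diag f)) =
    (if S = T then restr p (length_diag (\<lambda>l. f (l + length S))) else 0)"
  using assms by (auto simp: restr_def shift_def length_diag_def inM_def fun_eq_iff append_eq_append_conv)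

lemma inM_replicate_0: "0 < p \<Longrightarrow> inM p (replicate l 0) (replicate l 0)"
  by (auto simp: inM_def set_replicate_conv_if)

lemma linear_restr_length_diag: "Vector_Spaces.linear seq_scale cscale (\<lambda>f. restr p (length_diag f))"
  by unfold_locales (auto simp: restr_def length_diag_def seq_scale_def cscale_def fun_eq_iff)

lemma inj_restr_length_diag:
  assumes "0 < p"
  shows "inj (\<lambda>f. restr p (length_diag f))"
proof (rule injI)
  fix f g assume eq: "restr p (length_diag f) = restr p (length_diag g)"
  show "f = g"
  proof
    fix l
    have "restr p (length_diag f) (replicate l 0) (replicate l 0)
        = restr p (length_diag g) (replicate l 0) (replicate l 0)"
      by (simp add: eq)
    then show "f l = g l"
      using inM_replicate_0[OF assms] by (simp add: restr_def length_diag_def)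
  qed
qed

lemma shifts_length_diag_subset:
  "shifts p (length_diag f) \<subseteq> insert 0 ((\<lambda>f. restr p (length_diag f)) ` translates f)"
  by (auto simp: shifts_def restr_shift_length_diag translates_def)

lemma translates_subset_shifts_length_diag:
  assumes "0 < p"
  shows "(\<lambda>f. restr p (length_diag f)) ` translates f \<subseteq> shifts p (length_diag f)"
proof
  fix X assume "X \<in> (\<lambda>f. restr p (length_diag f)) ` translates f"
  then obtain m where "X = restr p (length_diag (\<lambda>l. f (l + m)))"
    by (auto simp: translates_def)
  then have "X = restr p (shift (replicate m 0) (replicate m 0) (length_diag f))"
    using restr_shift_length_diag[OF inM_replicate_0[OF assms]] by simp
  then show "X \<in> shifts p (length_diag f)"
    unfolding shifts_def using inM_replicate_0[OF assms] by blast
qed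

lemma complexity_length_diag:
  assumes "0 < p"
  shows "complexity p (length_diag f) = seq.dim (translates f)"
proof -
  have "insert 0 ((\<lambda>f. restr p (length_diag f)) ` translates f)
      \<subseteq> pm.span ((\<lambda>f. restr p (length_diag f)) ` translates f)"
    by (simp add: pm.span_zero pm.span_superset)
  then have "pm.span (shifts p (length_diag f)) = pm.span ((\<lambda>f. restr p (length_diag f)) ` translates f)"
    using order_trans[OF shifts_length_diag_subset] translates_subset_shifts_length_diag[OF assms]
      order_trans[OF _ pm.span_superset]
    by (simp add: pm.span_eq)
  then have "complexity p (length_diag f) = pm.dim ((\<lambda>f. restr p (length_diag f)) ` translates f)"
    unfolding complexity_def by (rule pm.span_eq_dim)
  also have "\<dots> = seq.dim (translates f)"
    by (rule dim_image_inj_linear[OF linear_restr_length_diag inj_restr_length_diag[OF assms]])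
  finally show ?thesis .
qed

lemma isRec_length_diag:
  assumes "finite B" "translates f \<subseteq> seq.span B"
  shows "isRec p (length_diag f)"
proof -
  interpret restr_diag: Vector_Spaces.linear seq_scale cscale "\<lambda>f. restr p (length_diag f)"
    by (rule linear_restr_length_diag)
  have "shifts p (length_diag f) \<subseteq> insert 0 ((\<lambda>f. restr p (length_diag f)) ` seq.span B)"
    using shifts_length_diag_subset[of p f] assms(2) by blast
  also have "\<dots> \<subseteq> pm.span ((\<lambda>f. restr p (length_diag f)) ` B)"
    by (simp add: restr_diag.span_image[symmetric] pm.span_zero)
  finally show ?thesis
    unfolding isRec_def using assms(1) by blast
qed

lemma pmult_length_diag:
  "restr p (pmult p (length_diag a) (length_diag b)) = restr p (length_diag (\<lambda>l. a l * b l))"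
proof -
  have "pmult p (length_diag a) (length_diag b) U W = length_diag (\<lambda>l. a l * b l) U W"
    if "inM p U W" for U W
  proof -
    let ?V = "{V. length V = length U \<and> set V \<subseteq> {..<p}}"
    have "finite ?V"
      using finite_lists_length_eq[of "{..<p}" "length U"] by (simp add: conj_commute)
    moreover have "U \<in> ?V"
      using that by (simp add: inM_def)
    moreover have "length_diag a U V * length_diag b V W
        = (if V = U then length_diag (\<lambda>l. a l * b l) U W else 0)" for V
      by (simp add: length_diag_def)
    ultimately show ?thesis
      unfolding pmult_def by (simp add: sum.delta')
  qed
  then show ?thesis by (simp add: restr_def fun_eq_iff)
qed

lemma isInverse_length_diag:
  assumes "isRec p (length_diag a)" "isRec p (length_diag b)" "\<And>l. a l * b l = 1"
  shows "isInverse p (length_diag a) (length_diag b)"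
proof -
  have "pId = length_diag (\<lambda>_. 1)"
    by (simp add: pId_def length_diag_def fun_eq_iff)
  then show ?thesis
    using assms by (simp add: isInverse_def pmult_length_diag mult.commute)
qed

lemma isRec_length_diag_exp_poly: "finite I \<Longrightarrow> isRec p (length_diag (exp_poly c z I))"
  by (rule isRec_length_diag[OF _ translates_exp_poly_subset]) simp

lemma complexity_length_diag_exp_poly:
  assumes "0 < p" "finite I" "inj_on z I" "\<forall>i\<in>I. c i \<noteq> 0"
  shows "complexity p (length_diag (exp_poly c z I)) = card I"
  using assms by (simp add: complexity_length_diag dim_translates_exp_poly)

lemma primitive_root_of_unity_exists:
  assumes "0 < M"
  obtains \<zeta> :: complex where "\<zeta> ^ M = 1" "inj_on ((^) \<zeta>) {..<M}"
proof
  define \<zeta> where "\<zeta> = exp (2 * of_real pi * \<i> / of_nat M)"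
  have pow: "\<zeta> ^ j = exp (2 * of_real pi * \<i> * of_nat j / of_nat M)" for j
    unfolding \<zeta>_def by (metis exp_of_nat_mult mult.commute times_divide_eq_right)
  show "\<zeta> ^ M = 1"
    using complex_root_unity[of M 1] assms by (simp add: pow)
  show "inj_on ((^) \<zeta>) {..<M}"
    using assms by (auto simp: inj_on_def pow complex_root_unity_eq)
qed

lemma one_minus_inverse_power_two_neq_0:
  assumes "0 < M"
  shows "1 - 1/2^M \<noteq> (0::complex)"
proof -
  have "(2::complex) ^ M = of_nat (2 ^ M)" "(2::nat) ^ M \<noteq> 1"
    using assms by simp_all
  then have "(2::complex) ^ M \<noteq> 1"
    by (metis of_nat_eq_1_iff)
  then show ?thesis
    by (simp add: field_simps)
qed

lemma one_minus_half_times_geometric_sum: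
  fixes w :: complex
  assumes "w ^ M = 1" "0 < M"
  shows "(1 - w / 2) * (\<Sum>r<M. (1/2)^r / (1 - 1/2^M) * w ^ r) = 1"
proof -
  have "(\<Sum>r<M. (1/2)^r / (1 - 1/2^M) * w ^ r) = (\<Sum>r<M. (w / 2) ^ r) / (1 - 1/2^M)"
    by (simp add: sum_divide_distrib power_divide)
  moreover have "(1 - w / 2) * (\<Sum>r<M. (w / 2) ^ r) = 1 - (w / 2) ^ M"
    by (simp add: one_diff_power_eq)
  moreover have "\<dots> = 1 - 1/2^M"
    using assms(1) by (simp add: power_divide)
  ultimately show ?thesis
    using one_minus_inverse_power_two_neq_0[OF assms(2)] by simp
qed

theorem mainTheorem12:
  fixes p N :: nat
  assumes "p > 1"
  shows "\<exists>G H. isInverse p G H \<and> complexity p G = 2 \<and> complexity p H \<ge> N"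
proof -
  define M where "M = N + 2"
  obtain \<zeta> :: complex where \<zeta>: "\<zeta> ^ M = 1" "inj_on ((^) \<zeta>) {..<M}"
    using primitive_root_of_unity_exists[of M] by (auto simp: M_def)
  define g where "g = exp_poly (\<lambda>r. (-1/2)^r) ((^) \<zeta>) {..<2}"
  define h where "h = exp_poly (\<lambda>r. (1/2)^r / (1 - 1/2^M)) ((^) \<zeta>) {..<M}"
  have "g l * h l = 1" for l
  proof -
    have "(\<zeta> ^ l) ^ M = 1"
      using \<zeta>(1) by (metis mult.commute power_mult power_one)
    then show ?thesis
      using one_minus_half_times_geometric_sum[of "\<zeta> ^ l" M]
      by (simp add: g_def h_def exp_poly_def M_def numeral_2_eq_2 power_mult[symmetric] mult.commute)
  qed
  then have "isInverse p (length_diag g) (length_diag h)"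
    unfolding g_def h_def by (intro isInverse_length_diag isRec_length_diag_exp_poly) simp_all
  moreover have "complexity p (length_diag g) = 2"
    using assms inj_on_subset[OF \<zeta>(2), of "{..<2}"]
    by (simp add: g_def complexity_length_diag_exp_poly M_def)
  moreover have "complexity p (length_diag h) = M"
    using assms \<zeta>(2) one_minus_inverse_power_two_neq_0[of M]
    by (simp add: h_def complexity_length_diag_exp_poly M_def)
  ultimately show ?thesis
    unfolding M_def by (intro exI[of _ "length_diag g"] exI[of _ "length_diag h"]) simp
qed

end
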